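(* Let $p\in(0,1)$, let $\mathbf{W}=(w_{i,j})$ be a fixed (deterministic) $m\times n$ real matrix, and let $\mathbf{x}=(x_1,\dots,x_n)$ be a random vector with finite second moments. Fix an output index $i$ and assume $\mathrm{Var}[(\mathbf{W}\mathbf{x})_i]>0$ and $\sum_{j=1}^n w_{i,j}^2\,\mathbb{E}[x_j^2]>0$. Then for the $i$th output coordinate, $$\Delta\big(\mathbf{W}\,\mathrm{Dropout}(\mathbf{x})\big)<1,$$ and $$\Delta\big(\mathrm{Dropout}(\mathbf{W}\mathbf{x})\big)<\Delta\big(\mathbf{W}\,\mathrm{Dropout}(\mathbf{x})\big)$$ holds if and only if $\sum_{j=1}^n\sum_{k\neq j} w_{i,j}w_{i,k}\,\mathbb{E}[x_jx_k]>0$.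
   Context: Dropout with keep probability $p\in(0,1)$: $\mathrm{Dropout}_{\mathrm{train}}(\mathbf{v})=\frac1p\mathbf{M}\mathbf{v}$, $\mathrm{Dropout}_{\mathrm{test}}(\mathbf{v})=\mathbf{v}$, where $\mathbf{M}$ is a diagonal matrix (of the size of $\mathbf{v}$) with i.i.d. $\mathrm{Bernoulli}(p)$ diagonal entries, independent of $\mathbf{x}$. For an operation $f$ having a training version $f_{\mathrm{train}}$ and a test version $f_{\mathrm{test}}$, the inconsistency ratio of its $i$th output coordinate is $\Delta(f(\mathbf{x}))=\mathrm{Var}[f_{\mathrm{test}}(\mathbf{x})_i]/\mathrm{Var}[f_{\mathrm{train}}(\mathbf{x})_i]$, where variances are taken over the joint randomness of $\mathbf{x}$ and the dropout mask. "PostDropout" is $\mathrm{Dropout}(\mathbf{W}\mathbf{x})$ (mask applied to the output, of size $m$) and "PreDropout" is $\mathbf{W}\,\mathrm{Dropout}(\mathbf{x})$ (mask applied to the input, of size $n$). *)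

theory Defs
  imports "HOL-Probability.Probability"
begin

definition bernoulli_rv :: "'a measure \<Rightarrow> real \<Rightarrow> ('a \<Rightarrow> real) \<Rightarrow> bool" where
  "bernoulli_rv M p Z \<longleftrightarrow>
     Z \<in> borel_measurable M \<and>
     (AE \<omega> in M. Z \<omega> = 0 \<or> Z \<omega> = 1) \<and>
     measure M {\<omega> \<in> space M. Z \<omega> = 1} = p"

text \<open>A dropout mask of size d: i.i.d. Bernoulli(p) diagonal entries, independent of
  the random vector x (given by its n coordinates).\<close>
definition dropout_mask ::
  "'a measure \<Rightarrow> real \<Rightarrow> nat \<Rightarrow> (nat \<Rightarrow> 'a \<Rightarrow> real) \<Rightarrow> nat \<Rightarrow> (nat \<Rightarrow> 'a \<Rightarrow> real) \<Rightarrow> bool" where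
  "dropout_mask M p d B n x \<longleftrightarrow>
     (\<forall>j<d. bernoulli_rv M p (B j)) \<and>
     prob_space.indep_vars M (\<lambda>_. borel) B {..<d} \<and>
     prob_space.indep_var M
        (PiM {..<n} (\<lambda>_. borel)) (\<lambda>\<omega>. \<lambda>j\<in>{..<n}. x j \<omega>)
        (PiM {..<d} (\<lambda>_. borel)) (\<lambda>\<omega>. \<lambda>j\<in>{..<d}. B j \<omega>)"

definition incons_ratio :: "'a measure \<Rightarrow> ('a \<Rightarrow> real) \<Rightarrow> ('a \<Rightarrow> real) \<Rightarrow> real" where
  "incons_ratio M f_test f_train = prob_space.variance M f_test / prob_space.variance M f_train"

end

theory Submission
  imports Defs
begin

text \<open>Write \<open>Y = (W x)\<^sub>i\<close>, \<open>\<mu> = E Y\<close>, \<open>S = \<Sum>\<^sub>j w\<^sub>i\<^sub>j\<^sup>2 E[x\<^sub>j\<^sup>2]\<close> for the diagonal and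
  \<open>C\<close> for the off-diagonal part of \<open>E[Y\<^sup>2]\<close>, so that \<open>Var Y = S + C - \<mu>\<^sup>2\<close>.
  Rescaling by \<open>1/p\<close> makes both dropout variants unbiased, so only second moments change.
  An independent mask entry \<open>B\<close> satisfies \<open>E[B\<^sup>2] = p\<close> but \<open>E[B\<^sub>j B\<^sub>k] = p\<^sup>2\<close> for \<open>j \<noteq> k\<close>:
  PreDropout therefore inflates only the diagonal, \<open>Var = S/p + C - \<mu>\<^sup>2\<close>, whereas
  PostDropout inflates all of \<open>E[Y\<^sup>2]\<close>, \<open>Var = (S + C)/p - \<mu>\<^sup>2\<close>. Both inconsistency ratios
  have the form \<open>V / (V + (1/p - 1) t)\<close>, with \<open>t = S\<close> resp. \<open>t = S + C\<close>, and comparing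
  them reduces to the sign of \<open>C\<close>.\<close>

lemma sum_diagonal_off_diagonal:
  fixes f :: "nat \<Rightarrow> nat \<Rightarrow> 'b::comm_monoid_add"
  shows "(\<Sum>j<n. \<Sum>k<n. f j k) = (\<Sum>j<n. f j j) + (\<Sum>j<n. \<Sum>k\<in>{..<n} - {j}. f j k)"
proof -
  have "(\<Sum>k<n. f j k) = f j j + (\<Sum>k\<in>{..<n} - {j}. f j k)" if "j < n" for j
    using that by (intro sum.remove) auto
  then show ?thesis by (simp add: sum.distrib)
qed

lemma dropout_ratio_inequalities:
  fixes p S C \<mu> V :: real
  assumes "0 < p" "p < 1" "0 < S" "V = S + C - \<mu>\<^sup>2" "0 < V"
  shows "V / (S / p + C - \<mu>\<^sup>2) < 1
    \<and> (V / ((S + C) / p - \<mu>\<^sup>2) < V / (S / p + C - \<mu>\<^sup>2) \<longleftrightarrow> 0 < C)"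
proof -
  define q where "q = 1 / p - 1"
  have "0 < q" using assms(1,2) by (simp add: q_def)
  have pre: "S / p + C - \<mu>\<^sup>2 = V + q * S"
    and post: "(S + C) / p - \<mu>\<^sup>2 = V + q * (S + C)"
    using assms(4) by (simp_all add: q_def algebra_simps)
  have "0 < S + C" using assms(4,5) by (smt (verit) zero_le_power2)
  then have a: "0 < q * S" and b: "0 < q * (S + C)" using \<open>0 < q\<close> assms(3) by simp_all
  have "V / (V + q * S) < 1" using a assms(5) by simp
  moreover have "V / (V + q * (S + C)) < V / (V + q * S)
      \<longleftrightarrow> V * (V + q * S) < V * (V + q * (S + C))"
    using a b assms(5) by (simp add: field_simps)
  moreover have "\<dots> \<longleftrightarrow> 0 < q * C"
    using assms(5) mult_less_cancel_left_pos[of V "q * S" "q * (S + C)"]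
    by (simp add: algebra_simps)
  ultimately show ?thesis unfolding pre post using \<open>0 < q\<close> by (simp add: zero_less_mult_iff)
qed

context prob_space
begin

lemma
  assumes "bernoulli_rv M p Z"
  shows bernoulli_rv_measurable: "Z \<in> borel_measurable M"
    and integrable_bernoulli_rv: "integrable M Z"
    and expectation_bernoulli_rv: "expectation Z = p"
    and AE_bernoulli_rv_idempotent: "AE \<omega> in M. Z \<omega> * Z \<omega> = Z \<omega>"
    and AE_bernoulli_rv_bounded: "AE \<omega> in M. \<bar>Z \<omega>\<bar> \<le> 1"
proof -
  have [measurable]: "Z \<in> borel_measurable M" and ae: "AE \<omega> in M. Z \<omega> = 0 \<or> Z \<omega> = 1"
    and prob: "measure M {\<omega> \<in> space M. Z \<omega> = 1} = p"
    using assms unfolding bernoulli_rv_def by auto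
  show "Z \<in> borel_measurable M" by measurable
  show "AE \<omega> in M. \<bar>Z \<omega>\<bar> \<le> 1" using ae by eventually_elim auto
  then show "integrable M Z" by (intro integrable_const_bound) auto
  have "AE \<omega> in M. Z \<omega> = indicator {\<omega> \<in> space M. Z \<omega> = 1} \<omega>"
    using ae AE_space by eventually_elim (auto simp: indicator_def)
  then have "expectation Z = measure M {\<omega> \<in> space M. Z \<omega> = 1}"
    by (subst integral_cong_AE) auto
  with prob show "expectation Z = p" by simp
  show "AE \<omega> in M. Z \<omega> * Z \<omega> = Z \<omega>" using ae by eventually_elim auto
qed

lemma integrable_mult_of_square_integrable:
  fixes f g :: "'a \<Rightarrow> real"
  assumes [measurable]: "f \<in> borel_measurable M" "g \<in> borel_measurable M"
    and "integrable M (\<lambda>\<omega>. (f \<omega>)\<^sup>2)" "integrable M (\<lambda>\<omega>. (g \<omega>)\<^sup>2)"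
  shows "integrable M (\<lambda>\<omega>. f \<omega> * g \<omega>)"
proof (rule Bochner_Integration.integrable_bound)
  show "integrable M (\<lambda>\<omega>. (f \<omega>)\<^sup>2 + (g \<omega>)\<^sup>2)" using assms(3,4) by simp
  have "\<bar>f \<omega> * g \<omega>\<bar> \<le> (f \<omega>)\<^sup>2 + (g \<omega>)\<^sup>2" for \<omega>
  proof -
    have "2 * \<bar>f \<omega>\<bar> * \<bar>g \<omega>\<bar> \<le> (f \<omega>)\<^sup>2 + (g \<omega>)\<^sup>2"
      using sum_squares_bound[of "\<bar>f \<omega>\<bar>" "\<bar>g \<omega>\<bar>"] by simp
    moreover have "0 \<le> \<bar>f \<omega>\<bar> * \<bar>g \<omega>\<bar>" by simp
    ultimately show ?thesis unfolding abs_mult by linarith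
  qed
  then show "AE \<omega> in M. norm (f \<omega> * g \<omega>) \<le> norm ((f \<omega>)\<^sup>2 + (g \<omega>)\<^sup>2)" by simp
qed simp

lemma
  fixes Z :: "nat \<Rightarrow> 'a \<Rightarrow> real"
  assumes [measurable]: "\<And>j. j < n \<Longrightarrow> Z j \<in> borel_measurable M"
    and sq: "\<And>j. j < n \<Longrightarrow> integrable M (\<lambda>\<omega>. (Z j \<omega>)\<^sup>2)"
  shows integrable_square_sum: "integrable M (\<lambda>\<omega>. (\<Sum>j<n. a j * Z j \<omega>)\<^sup>2)"
    and expectation_square_sum: "expectation (\<lambda>\<omega>. (\<Sum>j<n. a j * Z j \<omega>)\<^sup>2)
      = (\<Sum>j<n. (a j)\<^sup>2 * expectation (\<lambda>\<omega>. (Z j \<omega>)\<^sup>2))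
        + (\<Sum>j<n. \<Sum>k\<in>{..<n} - {j}. a j * a k * expectation (\<lambda>\<omega>. Z j \<omega> * Z k \<omega>))"
proof -
  have square: "(\<lambda>\<omega>. (\<Sum>j<n. a j * Z j \<omega>)\<^sup>2)
      = (\<lambda>\<omega>. \<Sum>j<n. \<Sum>k<n. a j * a k * (Z j \<omega> * Z k \<omega>))"
    by (simp add: power2_eq_square sum_product mult_ac)
  have int_pair: "integrable M (\<lambda>\<omega>. Z j \<omega> * Z k \<omega>)" if "j < n" "k < n" for j k
    using that by (intro integrable_mult_of_square_integrable sq) auto
  then have int_row: "integrable M (\<lambda>\<omega>. \<Sum>k<n. a j * a k * (Z j \<omega> * Z k \<omega>))" if "j < n" for j
    using that by (auto intro!: Bochner_Integration.integrable_sum integrable_mult_right)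
  then show "integrable M (\<lambda>\<omega>. (\<Sum>j<n. a j * Z j \<omega>)\<^sup>2)"
    unfolding square by (rule Bochner_Integration.integrable_sum) simp
  have "expectation (\<lambda>\<omega>. (\<Sum>j<n. a j * Z j \<omega>)\<^sup>2)
      = (\<Sum>j<n. \<Sum>k<n. a j * a k * expectation (\<lambda>\<omega>. Z j \<omega> * Z k \<omega>))"
    unfolding square using int_pair int_row by (simp add: Bochner_Integration.integral_sum)
  also have "\<dots> = (\<Sum>j<n. (a j)\<^sup>2 * expectation (\<lambda>\<omega>. (Z j \<omega>)\<^sup>2))
        + (\<Sum>j<n. \<Sum>k\<in>{..<n} - {j}. a j * a k * expectation (\<lambda>\<omega>. Z j \<omega> * Z k \<omega>))"
    by (simp add: sum_diagonal_off_diagonal power2_eq_square)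
  finally show "expectation (\<lambda>\<omega>. (\<Sum>j<n. a j * Z j \<omega>)\<^sup>2) = \<dots>" .
qed

lemma variance_sum:
  fixes Z :: "nat \<Rightarrow> 'a \<Rightarrow> real"
  assumes [measurable]: "\<And>j. j < n \<Longrightarrow> Z j \<in> borel_measurable M"
    and sq: "\<And>j. j < n \<Longrightarrow> integrable M (\<lambda>\<omega>. (Z j \<omega>)\<^sup>2)"
  shows "variance (\<lambda>\<omega>. \<Sum>j<n. a j * Z j \<omega>)
      = (\<Sum>j<n. (a j)\<^sup>2 * expectation (\<lambda>\<omega>. (Z j \<omega>)\<^sup>2))
        + (\<Sum>j<n. \<Sum>k\<in>{..<n} - {j}. a j * a k * expectation (\<lambda>\<omega>. Z j \<omega> * Z k \<omega>))
        - (\<Sum>j<n. a j * expectation (Z j))\<^sup>2"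
proof -
  have "integrable M (Z j)" if "j < n" for j
    using that by (intro square_integrable_imp_integrable[OF _ sq]) auto
  then have "integrable M (\<lambda>\<omega>. \<Sum>j<n. a j * Z j \<omega>)"
    and mean: "expectation (\<lambda>\<omega>. \<Sum>j<n. a j * Z j \<omega>) = (\<Sum>j<n. a j * expectation (Z j))"
    by (auto simp: Bochner_Integration.integral_sum)
  moreover have "integrable M (\<lambda>\<omega>. (\<Sum>j<n. a j * Z j \<omega>)\<^sup>2)"
    using assms by (rule integrable_square_sum)
  ultimately have "variance (\<lambda>\<omega>. \<Sum>j<n. a j * Z j \<omega>)
      = expectation (\<lambda>\<omega>. (\<Sum>j<n. a j * Z j \<omega>)\<^sup>2) - (\<Sum>j<n. a j * expectation (Z j))\<^sup>2"
    by (simp only: variance_eq flip: mean)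
  also have "expectation (\<lambda>\<omega>. (\<Sum>j<n. a j * Z j \<omega>)\<^sup>2)
      = (\<Sum>j<n. (a j)\<^sup>2 * expectation (\<lambda>\<omega>. (Z j \<omega>)\<^sup>2))
        + (\<Sum>j<n. \<Sum>k\<in>{..<n} - {j}. a j * a k * expectation (\<lambda>\<omega>. Z j \<omega> * Z k \<omega>))"
    using assms by (rule expectation_square_sum)
  finally show ?thesis .
qed

lemma dropout_mask_indep_var:
  assumes "dropout_mask M p d B n x"
    and "f \<in> borel_measurable (PiM {..<n} (\<lambda>_. borel))"
    and "g \<in> borel_measurable (PiM {..<d} (\<lambda>_. borel))"
  shows "indep_var borel (\<lambda>\<omega>. f (\<lambda>j\<in>{..<n}. x j \<omega>)) borel (\<lambda>\<omega>. g (\<lambda>j\<in>{..<d}. B j \<omega>))"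
  using indep_var_compose[OF _ assms(2,3)] assms(1) unfolding dropout_mask_def comp_def by blast

lemma
  fixes f g :: "(nat \<Rightarrow> real) \<Rightarrow> real"
  assumes mask: "dropout_mask M p d B n x"
    and "f \<in> borel_measurable (PiM {..<n} (\<lambda>_. borel))"
    and "g \<in> borel_measurable (PiM {..<d} (\<lambda>_. borel))"
    and "integrable M (\<lambda>\<omega>. f (\<lambda>j\<in>{..<n}. x j \<omega>))"
    and "integrable M (\<lambda>\<omega>. g (\<lambda>j\<in>{..<d}. B j \<omega>))"
  shows dropout_mask_integrable_mult:
      "integrable M (\<lambda>\<omega>. f (\<lambda>j\<in>{..<n}. x j \<omega>) * g (\<lambda>j\<in>{..<d}. B j \<omega>))"
    and dropout_mask_expectation_mult:
      "expectation (\<lambda>\<omega>. f (\<lambda>j\<in>{..<n}. x j \<omega>) * g (\<lambda>j\<in>{..<d}. B j \<omega>))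
        = expectation (\<lambda>\<omega>. f (\<lambda>j\<in>{..<n}. x j \<omega>)) * expectation (\<lambda>\<omega>. g (\<lambda>j\<in>{..<d}. B j \<omega>))"
  using indep_var_integrable indep_var_lebesgue_integral dropout_mask_indep_var[OF assms(1-3)] assms(4,5)
  by blast+

lemma
  assumes mask: "dropout_mask M p d B n x" and "j < d" "k < d"
  shows dropout_mask_integrable_pair: "integrable M (\<lambda>\<omega>. B j \<omega> * B k \<omega>)"
    and dropout_mask_expectation_pair:
      "expectation (\<lambda>\<omega>. B j \<omega> * B k \<omega>) = (if j = k then p else p\<^sup>2)"
proof -
  have bern: "bernoulli_rv M p (B l)" if "l < d" for l
    using mask that unfolding dropout_mask_def by blast
  note [measurable] = bernoulli_rv_measurable[OF bern]
  have "AE \<omega> in M. norm (B j \<omega> * B k \<omega>) \<le> 1"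
    using AE_bernoulli_rv_bounded[OF bern[OF \<open>j < d\<close>]] AE_bernoulli_rv_bounded[OF bern[OF \<open>k < d\<close>]]
    by eventually_elim (simp add: abs_mult mult_le_one)
  then show "integrable M (\<lambda>\<omega>. B j \<omega> * B k \<omega>)"
    using assms(2,3) by (intro integrable_const_bound) auto
  show "expectation (\<lambda>\<omega>. B j \<omega> * B k \<omega>) = (if j = k then p else p\<^sup>2)"
  proof (cases "j = k")
    case True
    then have "expectation (\<lambda>\<omega>. B j \<omega> * B k \<omega>) = expectation (B j)"
      using AE_bernoulli_rv_idempotent[OF bern[OF \<open>j < d\<close>]] assms(2)
      by (intro integral_cong_AE) auto
    with True show ?thesis using expectation_bernoulli_rv[OF bern] assms(2) by simp
  next
    case False
    have "indep_vars (\<lambda>_. borel) B {j, k}"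
      using mask assms(2,3) unfolding dropout_mask_def by (auto intro: indep_vars_subset)
    then have "expectation (\<lambda>\<omega>. \<Prod>l\<in>{j, k}. B l \<omega>) = (\<Prod>l\<in>{j, k}. expectation (B l))"
      using assms(2,3) by (intro indep_vars_lebesgue_integral) (auto intro: integrable_bernoulli_rv bern)
    with False show ?thesis
      using expectation_bernoulli_rv[OF bern] assms(2,3) by (simp add: power2_eq_square)
  qed
qed

lemma variance_pre_dropout:
  fixes w :: "nat \<Rightarrow> real"
  assumes "0 < p"
    and [measurable]: "\<And>j. j < n \<Longrightarrow> x j \<in> borel_measurable M"
    and sq: "\<And>j. j < n \<Longrightarrow> integrable M (\<lambda>\<omega>. (x j \<omega>)\<^sup>2)"
    and mask: "dropout_mask M p n B n x"
  shows "variance (\<lambda>\<omega>. \<Sum>j<n. w j * ((1 / p) * B j \<omega> * x j \<omega>))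
      = (\<Sum>j<n. (w j)\<^sup>2 * expectation (\<lambda>\<omega>. (x j \<omega>)\<^sup>2)) / p
        + (\<Sum>j<n. \<Sum>k\<in>{..<n} - {j}. w j * w k * expectation (\<lambda>\<omega>. x j \<omega> * x k \<omega>))
        - (\<Sum>j<n. w j * expectation (x j))\<^sup>2"
proof -
  define Z where "Z = (\<lambda>j \<omega>. (1 / p) * B j \<omega> * x j \<omega>)"
  have bern: "bernoulli_rv M p (B j)" if "j < n" for j
    using mask that unfolding dropout_mask_def by blast
  note [measurable] = bernoulli_rv_measurable[OF bern]
  have int_x: "integrable M (x j)" if "j < n" for j
    using that by (intro square_integrable_imp_integrable[OF _ sq]) auto
  have int_xx: "integrable M (\<lambda>\<omega>. x j \<omega> * x k \<omega>)" if "j < n" "k < n" for j k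
    using that by (intro integrable_mult_of_square_integrable sq) auto
  have ZZ: "(\<lambda>\<omega>. Z j \<omega> * Z k \<omega>)
      = (\<lambda>\<omega>. (1 / p)\<^sup>2 * (x j \<omega> * x k \<omega> * (B j \<omega> * B k \<omega>)))" for j k
    by (simp add: Z_def power2_eq_square mult_ac)
  have int_ZZ: "integrable M (\<lambda>\<omega>. Z j \<omega> * Z k \<omega>)"
    and E_ZZ: "expectation (\<lambda>\<omega>. Z j \<omega> * Z k \<omega>)
      = (1 / p)\<^sup>2 * expectation (\<lambda>\<omega>. x j \<omega> * x k \<omega>) * (if j = k then p else p\<^sup>2)"
    if "j < n" "k < n" for j k
    using dropout_mask_integrable_mult[OF mask, of "\<lambda>v. v j * v k" "\<lambda>v. v j * v k"]
      dropout_mask_expectation_mult[OF mask, of "\<lambda>v. v j * v k" "\<lambda>v. v j * v k"]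
      dropout_mask_integrable_pair[OF mask] dropout_mask_expectation_pair[OF mask]
      int_xx that
    by (simp_all add: ZZ)
  have E_Z: "expectation (Z j) = expectation (x j)" if "j < n" for j
  proof -
    have "expectation (Z j) = (1 / p) * (expectation (x j) * expectation (B j))"
      using dropout_mask_expectation_mult[OF mask, of "\<lambda>v. v j" "\<lambda>v. v j"]
        integrable_bernoulli_rv[OF bern] int_x that
      by (simp add: Z_def mult_ac)
    also have "\<dots> = expectation (x j)"
      using expectation_bernoulli_rv[OF bern] that \<open>0 < p\<close> by simp
    finally show ?thesis .
  qed
  have "variance (\<lambda>\<omega>. \<Sum>j<n. w j * Z j \<omega>)
      = (\<Sum>j<n. (w j)\<^sup>2 * expectation (\<lambda>\<omega>. (Z j \<omega>)\<^sup>2))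
        + (\<Sum>j<n. \<Sum>k\<in>{..<n} - {j}. w j * w k * expectation (\<lambda>\<omega>. Z j \<omega> * Z k \<omega>))
        - (\<Sum>j<n. w j * expectation (Z j))\<^sup>2"
    using int_ZZ by (intro variance_sum) (auto simp: Z_def power2_eq_square)
  also have "(\<Sum>j<n. (w j)\<^sup>2 * expectation (\<lambda>\<omega>. (Z j \<omega>)\<^sup>2))
      = (\<Sum>j<n. (w j)\<^sup>2 * expectation (\<lambda>\<omega>. (x j \<omega>)\<^sup>2)) / p"
    unfolding sum_divide_distrib
  proof (intro sum.cong refl)
    fix j assume "j \<in> {..<n}"
    then show "(w j)\<^sup>2 * expectation (\<lambda>\<omega>. (Z j \<omega>)\<^sup>2)
        = (w j)\<^sup>2 * expectation (\<lambda>\<omega>. (x j \<omega>)\<^sup>2) / p"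
      using E_ZZ[of j j] \<open>0 < p\<close> by (simp add: power2_eq_square)
  qed
  also have "(\<Sum>j<n. \<Sum>k\<in>{..<n} - {j}. w j * w k * expectation (\<lambda>\<omega>. Z j \<omega> * Z k \<omega>))
      = (\<Sum>j<n. \<Sum>k\<in>{..<n} - {j}. w j * w k * expectation (\<lambda>\<omega>. x j \<omega> * x k \<omega>))"
    using E_ZZ \<open>0 < p\<close> by (intro sum.cong refl) (auto simp: power2_eq_square)
  also have "(\<Sum>j<n. w j * expectation (Z j)) = (\<Sum>j<n. w j * expectation (x j))"
    using E_Z by simp
  finally show ?thesis by (simp add: Z_def)
qed

lemma variance_post_dropout:
  fixes Y B :: "'a \<Rightarrow> real"
  assumes "0 < p" and bern: "bernoulli_rv M p B" and indep: "indep_var borel Y borel B"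
    and [measurable]: "Y \<in> borel_measurable M" and sq: "integrable M (\<lambda>\<omega>. (Y \<omega>)\<^sup>2)"
  shows "variance (\<lambda>\<omega>. (1 / p) * B \<omega> * Y \<omega>)
      = expectation (\<lambda>\<omega>. (Y \<omega>)\<^sup>2) / p - (expectation Y)\<^sup>2"
proof -
  note [measurable] = bernoulli_rv_measurable[OF bern]
  have int_Y: "integrable M Y" by (rule square_integrable_imp_integrable[OF _ sq]) simp
  have int_B: "integrable M B" by (rule integrable_bernoulli_rv[OF bern])
  have int_BB: "integrable M (\<lambda>\<omega>. B \<omega> * B \<omega>)"
    using int_B AE_bernoulli_rv_idempotent[OF bern] by (subst integrable_cong_AE[where g = B]) auto
  have E_BB: "expectation (\<lambda>\<omega>. B \<omega> * B \<omega>) = p"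
    using AE_bernoulli_rv_idempotent[OF bern] expectation_bernoulli_rv[OF bern]
    by (subst integral_cong_AE[where g = B]) auto
  have "indep_var borel ((\<lambda>y. y\<^sup>2) \<circ> Y) borel ((\<lambda>b. b * b) \<circ> B)"
    by (rule indep_var_compose[OF indep]) auto
  then have indep_sq: "indep_var borel (\<lambda>\<omega>. (Y \<omega>)\<^sup>2) borel (\<lambda>\<omega>. B \<omega> * B \<omega>)"
    by (simp add: comp_def)
  have square: "(\<lambda>\<omega>. ((1 / p) * B \<omega> * Y \<omega>)\<^sup>2) = (\<lambda>\<omega>. (1 / p)\<^sup>2 * ((Y \<omega>)\<^sup>2 * (B \<omega> * B \<omega>)))"
    by (simp add: power2_eq_square mult_ac)
  have product: "(\<lambda>\<omega>. (1 / p) * B \<omega> * Y \<omega>) = (\<lambda>\<omega>. (1 / p) * (Y \<omega> * B \<omega>))"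
    by (simp add: mult_ac)
  have int_U: "integrable M (\<lambda>\<omega>. (1 / p) * B \<omega> * Y \<omega>)"
    and E_U: "expectation (\<lambda>\<omega>. (1 / p) * B \<omega> * Y \<omega>) = expectation Y"
    unfolding product
    using indep_var_integrable[OF indep int_Y int_B] indep_var_lebesgue_integral[OF indep int_Y int_B]
      expectation_bernoulli_rv[OF bern] \<open>0 < p\<close>
    by simp_all
  have int_UU: "integrable M (\<lambda>\<omega>. ((1 / p) * B \<omega> * Y \<omega>)\<^sup>2)"
    and E_UU: "expectation (\<lambda>\<omega>. ((1 / p) * B \<omega> * Y \<omega>)\<^sup>2) = expectation (\<lambda>\<omega>. (Y \<omega>)\<^sup>2) / p"
    unfolding square
    using indep_var_integrable[OF indep_sq sq int_BB] indep_var_lebesgue_integral[OF indep_sq sq int_BB]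
      E_BB \<open>0 < p\<close>
    by (simp_all add: power2_eq_square)
  have "variance (\<lambda>\<omega>. (1 / p) * B \<omega> * Y \<omega>)
      = expectation (\<lambda>\<omega>. ((1 / p) * B \<omega> * Y \<omega>)\<^sup>2) - (expectation (\<lambda>\<omega>. (1 / p) * B \<omega> * Y \<omega>))\<^sup>2"
    using int_U int_UU by (rule variance_eq)
  then show ?thesis unfolding E_UU E_U .
qed

lemma variance_post_dropout_sum:
  fixes w :: "nat \<Rightarrow> real"
  assumes "0 < p" "i < d"
    and [measurable]: "\<And>j. j < n \<Longrightarrow> x j \<in> borel_measurable M"
    and sq: "\<And>j. j < n \<Longrightarrow> integrable M (\<lambda>\<omega>. (x j \<omega>)\<^sup>2)"
    and mask: "dropout_mask M p d B n x"
  shows "variance (\<lambda>\<omega>. (1 / p) * B i \<omega> * (\<Sum>j<n. w j * x j \<omega>))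
      = ((\<Sum>j<n. (w j)\<^sup>2 * expectation (\<lambda>\<omega>. (x j \<omega>)\<^sup>2))
        + (\<Sum>j<n. \<Sum>k\<in>{..<n} - {j}. w j * w k * expectation (\<lambda>\<omega>. x j \<omega> * x k \<omega>))) / p
        - (\<Sum>j<n. w j * expectation (x j))\<^sup>2"
proof -
  define Y where "Y = (\<lambda>\<omega>. \<Sum>j<n. w j * x j \<omega>)"
  have "integrable M (x j)" if "j < n" for j
    using that by (intro square_integrable_imp_integrable[OF _ sq]) auto
  then have mean_Y: "expectation Y = (\<Sum>j<n. w j * expectation (x j))"
    unfolding Y_def by (auto simp: Bochner_Integration.integral_sum)
  have "indep_var borel (\<lambda>\<omega>. \<Sum>j<n. w j * (\<lambda>j\<in>{..<n}. x j \<omega>) j)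
      borel (\<lambda>\<omega>. (\<lambda>j\<in>{..<d}. B j \<omega>) i)"
    using \<open>i < d\<close> by (intro dropout_mask_indep_var[OF mask]) auto
  then have indep_Y: "indep_var borel Y borel (B i)"
    using \<open>i < d\<close> by (simp add: Y_def)
  have bern: "bernoulli_rv M p (B i)"
    using mask \<open>i < d\<close> unfolding dropout_mask_def by blast
  have meas_Y: "Y \<in> borel_measurable M"
    unfolding Y_def by measurable
  have square_int_Y: "integrable M (\<lambda>\<omega>. (Y \<omega>)\<^sup>2)"
    unfolding Y_def using assms(3) sq by (rule integrable_square_sum)
  have second_moment_Y: "expectation (\<lambda>\<omega>. (Y \<omega>)\<^sup>2)
      = (\<Sum>j<n. (w j)\<^sup>2 * expectation (\<lambda>\<omega>. (x j \<omega>)\<^sup>2))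
        + (\<Sum>j<n. \<Sum>k\<in>{..<n} - {j}. w j * w k * expectation (\<lambda>\<omega>. x j \<omega> * x k \<omega>))"
    unfolding Y_def using assms(3) sq by (rule expectation_square_sum)
  from variance_post_dropout[OF \<open>0 < p\<close> bern indep_Y meas_Y square_int_Y] show ?thesis
    unfolding mean_Y second_moment_Y unfolding Y_def .
qed

end

theorem proposition2:
  fixes M :: "'a measure" and p :: real and m n i :: nat
    and W :: "nat \<Rightarrow> nat \<Rightarrow> real"
    and x :: "nat \<Rightarrow> 'a \<Rightarrow> real"
    and Bin :: "nat \<Rightarrow> 'a \<Rightarrow> real"
    and Bout :: "nat \<Rightarrow> 'a \<Rightarrow> real"
  assumes "prob_space M"
    and "0 < p" "p < 1"
    and "i < m"
    and "\<And>j. j < n \<Longrightarrow> x j \<in> borel_measurable M"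
    and "\<And>j. j < n \<Longrightarrow> integrable M (\<lambda>\<omega>. (x j \<omega>)\<^sup>2)"
    and "dropout_mask M p n Bin n x"
    and "dropout_mask M p m Bout n x"
    and "prob_space.variance M (\<lambda>\<omega>. \<Sum>j<n. W i j * x j \<omega>) > 0"
    and "(\<Sum>j<n. (W i j)\<^sup>2 * prob_space.expectation M (\<lambda>\<omega>. (x j \<omega>)\<^sup>2)) > 0"
  shows "incons_ratio M (\<lambda>\<omega>. \<Sum>j<n. W i j * x j \<omega>)
                        (\<lambda>\<omega>. \<Sum>j<n. W i j * ((1 / p) * Bin j \<omega> * x j \<omega>)) < 1
       \<and> (incons_ratio M (\<lambda>\<omega>. \<Sum>j<n. W i j * x j \<omega>)
                        (\<lambda>\<omega>. (1 / p) * Bout i \<omega> * (\<Sum>j<n. W i j * x j \<omega>))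
            < incons_ratio M (\<lambda>\<omega>. \<Sum>j<n. W i j * x j \<omega>)
                        (\<lambda>\<omega>. \<Sum>j<n. W i j * ((1 / p) * Bin j \<omega> * x j \<omega>))
          \<longleftrightarrow> (\<Sum>j<n. \<Sum>k\<in>{..<n} - {j}. W i j * W i k * prob_space.expectation M (\<lambda>\<omega>. x j \<omega> * x k \<omega>)) > 0)"
proof -
  interpret prob_space M by fact
  define Y where "Y = (\<lambda>\<omega>. \<Sum>j<n. W i j * x j \<omega>)"
  define S where "S = (\<Sum>j<n. (W i j)\<^sup>2 * expectation (\<lambda>\<omega>. (x j \<omega>)\<^sup>2))"
  define C where "C = (\<Sum>j<n. \<Sum>k\<in>{..<n} - {j}. W i j * W i k * expectation (\<lambda>\<omega>. x j \<omega> * x k \<omega>))"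
  define \<mu> where "\<mu> = (\<Sum>j<n. W i j * expectation (x j))"
  have var_Y: "variance Y = S + C - \<mu>\<^sup>2"
    unfolding Y_def S_def C_def \<mu>_def using assms(5,6) by (rule variance_sum)
  have var_pre: "variance (\<lambda>\<omega>. \<Sum>j<n. W i j * ((1 / p) * Bin j \<omega> * x j \<omega>)) = S / p + C - \<mu>\<^sup>2"
    unfolding S_def C_def \<mu>_def using assms(2,5,6,7) by (rule variance_pre_dropout)
  have var_post: "variance (\<lambda>\<omega>. (1 / p) * Bout i \<omega> * Y \<omega>) = (S + C) / p - \<mu>\<^sup>2"
    unfolding Y_def S_def C_def \<mu>_def using assms(2,4,5,6,8) by (rule variance_post_dropout_sum)
  from dropout_ratio_inequalities[OF assms(2,3) _ var_Y] show ?thesis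
    using assms(9,10) unfolding incons_ratio_def var_pre var_post[unfolded Y_def] S_def C_def Y_def
    by simp
qed

end
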